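(* Let $m$ be a positive integer, $q>1$ real, $\kappa\in\mathbb{C}$ with $\kappa\notin\frac{2\pi i}{\log q}\mathbb{Z}$, $c\in\mathbb{C}$, and let $\Psi_0,\dots,\Psi_{m-1}$ and $\Xi_0,\dots,\Xi_{m-1}$ be $1$-periodic continuous functions such that $$\sum_{0\le k<m}(\log_qN)^k\Psi_k(\log_qN)=\sum_{0\le k<m}(\log_qN)^k\Xi_k(\log_qN)+cN^{-\kappa}+o(1)$$ for integers $N\to\infty$. Then $\Psi_k=\Xi_k$ for $0\le k<m$. *)

theory Defs
  imports "HOL-Analysis.Analysis"
begin

end

theory Submission
  imports Defs "HOL-Real_Asymp.Real_Asymp"
begin

text \<open>Put d_k = Psi_k - Xi_k; by induction on m only the top coefficient d_n has to vanish.
  Fix y and sample along N_j = floor (q^(j + y)). Then X_j = log_q N_j = j + y + o(1), so by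
  periodicity and continuity d_k(X_j) tends to d_k(y), and dividing the hypothesis by X_j^n shows
  that c N_j^(-kappa) / X_j^n tends to d_n(y). Consecutive terms of this sequence have ratio
  tending to q^(-kappa), which differs from 1 by the assumption on kappa, so the limit is 0.\<close>

lemma periodic_add_of_nat:
  assumes "\<And>x. g (x + 1) = g x"
  shows "g (x + real n) = g x"
proof (induction n)
  case (Suc n)
  have "x + real (Suc n) = (x + real n) + 1" by simp
  then show ?case using assms Suc by metis
qed simp

lemma periodic_tendsto_along_shifts:
  fixes g :: "real \<Rightarrow> 'a::topological_space"
  assumes "\<And>x. g (x + 1) = g x" and "isCont g y" and "(\<lambda>j. X j - real j) \<longlonglongrightarrow> y"
  shows "(\<lambda>j. g (X j)) \<longlonglongrightarrow> g y"
proof -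
  have "(\<lambda>j. g (X j - real j)) \<longlonglongrightarrow> g y"
    using isCont_tendsto_compose assms(2,3) .
  moreover have "g (X j - real j) = g (X j)" for j
    using periodic_add_of_nat[of g "X j - real j" j] assms(1) by simp
  ultimately show ?thesis by simp
qed

lemma limit_eq_0_if_ratio_tendsto_neq_1:
  fixes u r :: "nat \<Rightarrow> 'a::real_normed_field"
  assumes u: "u \<longlonglongrightarrow> L" and r: "r \<longlonglongrightarrow> w" and "w \<noteq> 1"
    and "eventually (\<lambda>j. u (Suc j) = r j * u j) sequentially"
  shows "L = 0"
proof -
  have "(\<lambda>j. r j * u j) \<longlonglongrightarrow> w * L" using tendsto_mult[OF r u] .
  then have "(\<lambda>j. u (Suc j)) \<longlonglongrightarrow> w * L"
    by (rule Lim_transform_eventually) (use assms(4) in \<open>auto elim: eventually_mono\<close>)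
  then have "L = w * L" using LIMSEQ_Suc[OF u] LIMSEQ_unique by blast
  then have "(1 - w) * L = 0" by (simp add: algebra_simps)
  then show ?thesis using \<open>w \<noteq> 1\<close> by simp
qed

lemma sampling_sequence:
  fixes q y :: real
  assumes "q > 1"
  obtains N :: "nat \<Rightarrow> nat"
  where "filterlim N at_top sequentially" and "(\<lambda>j. log q (real (N j)) - real j) \<longlonglongrightarrow> y"
proof
  define z where "z j = q powr (real j + y)" for j :: nat
  have "filterlim z at_top sequentially"
    unfolding z_def using assms by real_asymp
  then show "filterlim (\<lambda>j. nat \<lfloor>z j\<rfloor>) at_top sequentially"
    by (intro filterlim_compose[OF filterlim_nat_sequentially]
        filterlim_compose[OF filterlim_floor_sequentially])
  have "(\<lambda>j. log q (real_of_int \<lfloor>z j\<rfloor>) - real j) \<longlonglongrightarrow> y"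
    unfolding z_def using assms by real_asymp
  moreover have "real (nat \<lfloor>z j\<rfloor>) = real_of_int \<lfloor>z j\<rfloor>" for j
    by (simp add: z_def)
  ultimately show "(\<lambda>j. log q (real (nat \<lfloor>z j\<rfloor>)) - real j) \<longlonglongrightarrow> y"
    by simp
qed

lemma exp_mult_ln_neq_1:
  fixes q :: real and \<kappa> :: complex
  assumes "q > 1" and "\<forall>j::int. \<kappa> \<noteq> 2 * of_real pi * \<i> * of_int j / of_real (ln q)"
  shows "exp (- \<kappa> * of_real (ln q)) \<noteq> 1"
proof
  assume "exp (- \<kappa> * of_real (ln q)) = 1"
  then obtain k :: int where re: "Re (- \<kappa> * of_real (ln q)) = 0"
      and im: "Im (- \<kappa> * of_real (ln q)) = of_int (2 * k) * pi"
    unfolding exp_eq_1 by blast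
  have "\<kappa> = 2 * of_real pi * \<i> * of_int (- k) / of_real (ln q)"
    using re im \<open>q > 1\<close> by (simp add: complex_eq_iff field_simps)
  then show False using assms(2) by blast
qed

lemma leading_coefficient_tendsto:
  fixes X :: "nat \<Rightarrow> real" and a :: "nat \<Rightarrow> nat \<Rightarrow> 'a::real_normed_field"
  assumes X: "filterlim X at_top sequentially"
    and a: "\<And>k. k \<le> n \<Longrightarrow> (\<lambda>j. a k j) \<longlonglongrightarrow> A k"
    and v: "(\<lambda>j. (\<Sum>k\<le>n. of_real (X j) ^ k * a k j) - v j) \<longlonglongrightarrow> 0"
  shows "(\<lambda>j. v j / of_real (X j) ^ n) \<longlonglongrightarrow> A n"
proof -
  define iv where "iv j = inverse (of_real (X j) :: 'a)" for j
  have iv: "iv \<longlonglongrightarrow> 0"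
    using tendsto_of_real[OF tendsto_inverse_0_at_top[OF X], where 'a='a]
    by (simp add: iv_def[abs_def] of_real_inverse)
  have lower: "(\<lambda>j. a k j * iv j ^ (n - k)) \<longlonglongrightarrow> 0" if "k < n" for k
    using tendsto_mult[OF a[of k] tendsto_power[OF iv, of "n - k"]] that by (simp add: power_0_left)
  have "(\<lambda>j. a n j + (\<Sum>k<n. a k j * iv j ^ (n - k))
      - ((\<Sum>k\<le>n. of_real (X j) ^ k * a k j) - v j) * iv j ^ n) \<longlonglongrightarrow> A n + 0 - 0 * 0 ^ n"
    by (intro tendsto_intros a v iv tendsto_null_sum lower) auto
  moreover have "eventually (\<lambda>j. a n j + (\<Sum>k<n. a k j * iv j ^ (n - k))
      - ((\<Sum>k\<le>n. of_real (X j) ^ k * a k j) - v j) * iv j ^ n = v j / of_real (X j) ^ n) sequentially"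
    using X[unfolded filterlim_at_top_dense, rule_format, of 0]
  proof eventually_elim
    case (elim j)
    then have "X j \<noteq> 0" by simp
    have "of_real (X j) ^ k * a k j * iv j ^ n = a k j * iv j ^ (n - k)" if "k \<le> n" for k
      using that \<open>X j \<noteq> 0\<close>
      by (simp add: iv_def power_diff power_inverse divide_inverse)
    then have "(\<Sum>k\<le>n. of_real (X j) ^ k * a k j) * iv j ^ n = (\<Sum>k\<le>n. a k j * iv j ^ (n - k))"
      unfolding sum_distrib_right by (intro sum.cong) auto
    also have "\<dots> = a n j + (\<Sum>k<n. a k j * iv j ^ (n - k))"
      by (simp add: lessThan_Suc_atMost[symmetric])
    finally have "(\<Sum>k\<le>n. of_real (X j) ^ k * a k j) * iv j ^ n = \<dots>" .
    then show ?case
      by (simp add: algebra_simps iv_def power_inverse divide_inverse)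
  qed
  ultimately show ?thesis by (simp add: Lim_transform_eventually)
qed

lemma exp_over_power_limit_eq_0:
  fixes X :: "nat \<Rightarrow> real" and a c L :: complex
  assumes X: "filterlim X at_top sequentially"
    and step: "(\<lambda>j. X (Suc j) - X j) \<longlonglongrightarrow> 1"
    and "exp a \<noteq> 1"
    and lim: "(\<lambda>j. c * exp (a * of_real (X j)) / of_real (X j) ^ n) \<longlonglongrightarrow> L"
  shows "L = 0"
proof -
  define r where "r j = exp (a * of_real (X (Suc j) - X j)) * of_real (X j / X (Suc j)) ^ n" for j
  have XS: "filterlim (\<lambda>j. X (Suc j)) at_top sequentially"
    using filterlim_compose[OF X filterlim_Suc] by (simp add: o_def)
  have "(\<lambda>j. 1 - (X (Suc j) - X j) / X (Suc j)) \<longlonglongrightarrow> 1 - 0"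
    by (intro tendsto_intros tendsto_divide_0[OF step] filterlim_at_top_imp_at_infinity XS)
  moreover have "eventually (\<lambda>j. 1 - (X (Suc j) - X j) / X (Suc j) = X j / X (Suc j)) sequentially"
    using XS[unfolded filterlim_at_top_dense, rule_format, of 0]
    by eventually_elim (simp add: field_simps)
  ultimately have "(\<lambda>j. X j / X (Suc j)) \<longlonglongrightarrow> 1"
    by (simp add: Lim_transform_eventually)
  then have "r \<longlonglongrightarrow> exp (a * of_real 1) * of_real 1 ^ n"
    unfolding r_def[abs_def] by (intro tendsto_intros step)
  moreover have "eventually (\<lambda>j. c * exp (a * of_real (X (Suc j))) / of_real (X (Suc j)) ^ n
      = r j * (c * exp (a * of_real (X j)) / of_real (X j) ^ n)) sequentially"
    using X[unfolded filterlim_at_top_dense, rule_format, of 0]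
      XS[unfolded filterlim_at_top_dense, rule_format, of 0]
  proof eventually_elim
    case (elim j)
    have "exp (a * of_real (X (Suc j))) = exp (a * of_real (X (Suc j) - X j)) * exp (a * of_real (X j))"
      by (simp add: exp_add[symmetric] algebra_simps)
    then show ?case
      using elim by (simp add: r_def field_simps)
  qed
  ultimately show ?thesis
    using limit_eq_0_if_ratio_tendsto_neq_1[OF lim] \<open>exp a \<noteq> 1\<close> by simp
qed

lemma top_coefficient_eq_0:
  fixes d :: "nat \<Rightarrow> real \<Rightarrow> complex" and q :: real and \<kappa> c :: complex
  assumes q: "q > 1" and nonres: "exp (- \<kappa> * of_real (ln q)) \<noteq> 1"
    and per: "\<And>k x. k \<le> n \<Longrightarrow> d k (x + 1) = d k x"
    and cont: "\<And>k. k \<le> n \<Longrightarrow> continuous_on UNIV (d k)"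
    and hyp: "(\<lambda>N::nat. (\<Sum>k\<le>n. of_real (log q (real N)) ^ k * d k (log q (real N)))
          - c * of_nat N powr (- \<kappa>)) \<longlonglongrightarrow> 0"
  shows "d n y = 0"
proof -
  obtain N :: "nat \<Rightarrow> nat" where N: "filterlim N at_top sequentially"
    and "(\<lambda>j. log q (real (N j)) - real j) \<longlonglongrightarrow> y"
    using sampling_sequence[OF q] .
  define X where "X j = log q (real (N j))" for j
  have shift: "(\<lambda>j. X j - real j) \<longlonglongrightarrow> y"
    unfolding X_def by fact
  have X: "filterlim X at_top sequentially"
    using filterlim_tendsto_add_at_top[OF shift filterlim_real_sequentially] by simp
  have "(\<lambda>j. 1 + ((X (Suc j) - real (Suc j)) - (X j - real j))) \<longlonglongrightarrow> 1 + (y - y)"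
    by (intro tendsto_intros LIMSEQ_Suc[OF shift] shift)
  then have step: "(\<lambda>j. X (Suc j) - X j) \<longlonglongrightarrow> 1"
    by (simp add: algebra_simps)
  have "(\<lambda>j. c * of_nat (N j) powr (- \<kappa>) / of_real (X j) ^ n) \<longlonglongrightarrow> d n y"
  proof (rule leading_coefficient_tendsto[OF X])
    show "(\<lambda>j. d k (X j)) \<longlonglongrightarrow> d k y" if "k \<le> n" for k
    proof (rule periodic_tendsto_along_shifts[OF _ _ shift])
      show "d k (x + 1) = d k x" for x using per that .
      show "isCont (d k) y" using cont that by (simp add: continuous_on_eq_continuous_at)
    qed
    show "(\<lambda>j. (\<Sum>k\<le>n. of_real (X j) ^ k * d k (X j)) - c * of_nat (N j) powr (- \<kappa>)) \<longlonglongrightarrow> 0"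
      using filterlim_compose[OF hyp N] by (simp add: X_def)
  qed
  moreover have "eventually (\<lambda>j. c * of_nat (N j) powr (- \<kappa>) / of_real (X j) ^ n
      = c * exp (- \<kappa> * of_real (ln q) * of_real (X j)) / of_real (X j) ^ n) sequentially"
    using N[unfolded filterlim_at_top, rule_format, of 1]
  proof eventually_elim
    case (elim j)
    then have "ln (real (N j)) = ln q * X j"
      using q by (simp add: X_def log_def)
    then show ?case
      using elim by (simp add: powr_def mult_ac)
  qed
  ultimately have "(\<lambda>j. c * exp (- \<kappa> * of_real (ln q) * of_real (X j)) / of_real (X j) ^ n) \<longlonglongrightarrow> d n y"
    by (rule Lim_transform_eventually)
  then show ?thesis
    by (rule exp_over_power_limit_eq_0[OF X step nonres])
qed

lemma coefficients_eq_0: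
  fixes d :: "nat \<Rightarrow> real \<Rightarrow> complex" and q :: real and \<kappa> c :: complex
  assumes q: "q > 1" and nonres: "exp (- \<kappa> * of_real (ln q)) \<noteq> 1"
    and "\<And>k x. k < m \<Longrightarrow> d k (x + 1) = d k x"
    and "\<And>k. k < m \<Longrightarrow> continuous_on UNIV (d k)"
    and "(\<lambda>N::nat. (\<Sum>k<m. of_real (log q (real N)) ^ k * d k (log q (real N)))
          - c * of_nat N powr (- \<kappa>)) \<longlonglongrightarrow> 0"
    and "k < m"
  shows "d k = (\<lambda>_. 0)"
  using assms(3-)
proof (induction m arbitrary: k)
  case (Suc n)
  have top: "d n = (\<lambda>_. 0)"
    using top_coefficient_eq_0[OF q nonres, of n d c] Suc.prems(1-3)
    by (simp add: less_Suc_eq_le lessThan_Suc_atMost fun_eq_iff)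
  then have "(\<lambda>N::nat. (\<Sum>k<n. of_real (log q (real N)) ^ k * d k (log q (real N)))
          - c * of_nat N powr (- \<kappa>)) \<longlonglongrightarrow> 0"
    using Suc.prems(3) by simp
  then show ?case
    using Suc.IH Suc.prems(1,2,4) top by (metis less_Suc_eq)
qed simp

theorem lemmaF2:
  fixes m :: nat and q :: real and \<kappa> c :: complex
    and \<Psi> \<Xi> :: "nat \<Rightarrow> real \<Rightarrow> complex"
  assumes "m > 0" and "q > 1"
    and "\<forall>j::int. \<kappa> \<noteq> 2 * of_real pi * \<i> * of_int j / of_real (ln q)"
    and "\<forall>k<m. \<forall>x. \<Psi> k (x + 1) = \<Psi> k x"
    and "\<forall>k<m. \<forall>x. \<Xi> k (x + 1) = \<Xi> k x"
    and "\<forall>k<m. continuous_on UNIV (\<Psi> k)"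
    and "\<forall>k<m. continuous_on UNIV (\<Xi> k)"
    and "(\<lambda>N::nat. (\<Sum>k<m. of_real (log q (real N)) ^ k * \<Psi> k (log q (real N)))
          - (\<Sum>k<m. of_real (log q (real N)) ^ k * \<Xi> k (log q (real N)))
          - c * of_nat N powr (- \<kappa>)) \<longlonglongrightarrow> 0"
  shows "\<forall>k<m. \<Psi> k = \<Xi> k"
proof (intro allI impI)
  fix k assume "k < m"
  define d where "d k x = \<Psi> k x - \<Xi> k x" for k x
  have "d k = (\<lambda>_. 0)"
  proof (rule coefficients_eq_0[OF assms(2) exp_mult_ln_neq_1[OF assms(2,3)] _ _ _ \<open>k < m\<close>])
    show "d k (x + 1) = d k x" if "k < m" for k x
      using assms(4,5) that by (simp add: d_def)
    show "continuous_on UNIV (d k)" if "k < m" for k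
      using assms(6,7) that unfolding d_def[abs_def] by (intro continuous_on_diff) auto
    show "(\<lambda>N::nat. (\<Sum>k<m. of_real (log q (real N)) ^ k * d k (log q (real N)))
          - c * of_nat N powr (- \<kappa>)) \<longlonglongrightarrow> 0"
      using assms(8) by (simp add: d_def sum_subtractf[symmetric] right_diff_distrib)
  qed
  then show "\<Psi> k = \<Xi> k"
    by (simp add: d_def fun_eq_iff)
qed

end
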